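(* Let $(\mathcal W,\rhd)$ be a well-founded frame (over a fixed syntactical $\lambda$-algebra $(\mathcal V,\cdot,[\![-]\!])$). Then $\mathcal I[\bullet(A\to B)]^\eta_p=\mathcal I[\bullet A\to\bullet B]^\eta_p$ holds for all type expressions $A,B$, all hereditary type environments $\eta$ and all $p\in\mathcal W$ if and only if $\rhd$ is locally linear.
   Context: Type expressions: fix a countably infinite set of type variables $X,Y,Z,\dots$. Pseudo type expressions are generated by $A::=X\mid A\to A\mid \bullet A\mid \mu X.A$ ($\mu$ binds $X$; $\alpha$-convertible expressions are identified; $\to$ associates to the right; $\bullet$ binds tighter than $\to$, which binds tighter than $\mu$). $A[B/X]$ denotes capture-avoiding substitution. $\top$ abbreviates $\mu X.\bullet X$, and $\bullet^n A$ denotes $A$ prefixed by $n$ copies of $\bullet$. The tail $t(A)$ is defined by $t(X)=X$, $t(A\to B)=t(B)$, $t(\bullet A)=\bullet t(A)$, $t(\mu X.A)=\mu X.t(A)$; it always has the form $\bullet^{m_0}\mu X_1.\bullet^{m_1}\mu X_2.\cdots\mu X_n.\bullet^{m_n}Y$. $A$ is a $\top$-variant iff $Y=X_i$ for some $1\le i\le n$ with $X_i\notin\{X_{i+1},\dots,X_n\}$ and $m_i+\dots+m_n\ge 1$. $A$ is proper in $X$ iff: a variable $Y$ is proper in $X$ iff $Y\neq X$; $\bullet A$ is always proper in $X$; $A\to B$ is proper in $X$ iff both $A,B$ are proper in $X$ or $B$ is a $\top$-variant; for $Y\ne X$, $\mu Y.A$ is proper in $X$ iff $A$ is proper in $X$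 or $\mu Y.A$ is a $\top$-variant. Type expressions are the least set of pseudo type expressions containing all type variables, closed under $\to$ and $\bullet$, and containing $\mu X.A$ whenever it contains $A$ and $A$ is proper in $X$. Semantics: a syntactical $\lambda$-algebra $(\mathcal V,\cdot,[\![-]\!])$ consists of a nonempty set $\mathcal V$, a map $\cdot:\mathcal V\times\mathcal V\to\mathcal V$, and values $[\![M]\!]_\rho\in\mathcal V$ for untyped $\lambda$-terms $M$ and maps $\rho$ from individual variables to $\mathcal V$, such that $[\![x]\!]_\rho=\rho(x)$, $[\![MN]\!]_\rho=[\![M]\!]_\rho\cdot[\![N]\!]_\rho$, $[\![\lambda x.M]\!]_\rho\cdot v=[\![M]\!]_{\rho[v/x]}$, $[\![M]\!]_\rho$ depends only on $\rho$ restricted to free variables of $M$, and $M=_\beta N$ implies $[\![M]\!]_\rho=[\![N]\!]_\rho$. A well-founded frame is a pair $(\mathcal W,\rhd)$ with $\mathcal W$ nonempty and $\rhd$ a binary relation on $\mathcal W$ admitting no infinite chain $p_0\rhd p_1\rhd p_2\rhd\cdots$; $\trianglerighteq$ denotes the reflexive-transitive closure of $\rhd$. $\rhd$ is locally linear if whenever $p\rhd q$ there is $r$ with $p\trianglerighteq r\rhd q$ such that $r\rhd s$ implies $q\trianglerighteq s$ for all $s$. A $\lambda$A-frame is a well-founded frame whose $\rhd$ is locally linear. A type environment $\eta$ assigns a set $\eta(X)_p\subseteq\mathcal V$ to each type variable $X$ and world $p$; it is hereditary if $p\rhd q$ implies $\eta(X)_p\subseteq\eta(X)_q$. For hereditary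 $\eta$, $\mathcal I[A]^\eta_p\subseteq\mathcal V$ is defined (by well-founded induction on $p$ and the syntactic rank of $A$) by: $\mathcal I[A]^\eta_p=\mathcal V$ if $A$ is a $\top$-variant; otherwise $\mathcal I[X]^\eta_p=\eta(X)_p$; $\mathcal I[\bullet A]^\eta_p=\{u\mid u\in\mathcal I[A]^\eta_q\text{ for all }q\text{ with }p\rhd q\}$; $\mathcal I[A\to B]^\eta_p=\{u\mid \text{for all }q\text{ with }p\trianglerighteq q\text{ and all }v\in\mathcal I[A]^\eta_q,\ u\cdot v\in\mathcal I[B]^\eta_q\}$; $\mathcal I[\mu X.A]^\eta_p=\mathcal I[A[\mu X.A/X]]^\eta_p$. *)

theory Defs
  imports Main
begin

section \<open>Type expressions (de Bruijn representation, so alpha-equivalent expressions are identified)\<close>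

text \<open>TVar n is a type variable (a de Bruijn index; free variables are the indices that
  exceed the binding depth, and the countably many type variables X,Y,Z,... are the naturals);
  Mu A binds index 0 in A.\<close>

datatype ty = TVar nat | Arr ty ty | Later ty | Mu ty

fun lift_ty :: "nat \<Rightarrow> ty \<Rightarrow> ty" where
  "lift_ty k (TVar n) = (if n < k then TVar n else TVar (Suc n))"
| "lift_ty k (Arr a b) = Arr (lift_ty k a) (lift_ty k b)"
| "lift_ty k (Later a) = Later (lift_ty k a)"
| "lift_ty k (Mu a) = Mu (lift_ty (Suc k) a)"

text \<open>Capture-avoiding substitution: subst_ty A k S replaces index k by S (and lowers the
  larger free indices, since the binder of k disappears).\<close>
fun subst_ty :: "ty \<Rightarrow> nat \<Rightarrow> ty \<Rightarrow> ty" where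
  "subst_ty (TVar n) k s = (if n < k then TVar n else if n = k then s else TVar (n - 1))"
| "subst_ty (Arr a b) k s = Arr (subst_ty a k s) (subst_ty b k s)"
| "subst_ty (Later a) k s = Later (subst_ty a k s)"
| "subst_ty (Mu a) k s = Mu (subst_ty a (Suc k) (lift_ty 0 s))"

fun tail :: "ty \<Rightarrow> ty" where
  "tail (TVar n) = TVar n"
| "tail (Arr a b) = tail b"
| "tail (Later a) = Later (tail a)"
| "tail (Mu a) = Mu (tail a)"

text \<open>refers_to C k: the chain C (of Later/Mu ending in a variable) ends in the variable
  bound k binders outside C.  guarded_ref C k: additionally at least one Later occurs in C
  before that variable is reached.\<close>
fun refers_to :: "ty \<Rightarrow> nat \<Rightarrow> bool" where
  "refers_to (TVar n) k = (n = k)"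
| "refers_to (Arr a b) k = False"
| "refers_to (Later a) k = refers_to a k"
| "refers_to (Mu a) k = refers_to a (Suc k)"

fun guarded_ref :: "ty \<Rightarrow> nat \<Rightarrow> bool" where
  "guarded_ref (TVar n) k = False"
| "guarded_ref (Arr a b) k = False"
| "guarded_ref (Later a) k = refers_to a k"
| "guarded_ref (Mu a) k = guarded_ref a (Suc k)"

text \<open>A tail bullet^m0 mu X1. bullet^m1 ... mu Xn. bullet^mn Y is a top-variant tail iff
  Y is bound by some binder Xi (with no rebinding, automatic in de Bruijn form) and
  m_i + ... + m_n >= 1, i.e. some bullet lies between that binder and Y.\<close>
fun top_tail :: "ty \<Rightarrow> bool" where
  "top_tail (TVar n) = False"
| "top_tail (Arr a b) = False"
| "top_tail (Later a) = top_tail a"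
| "top_tail (Mu a) = (top_tail a \<or> guarded_ref a 0)"

definition top_variant :: "ty \<Rightarrow> bool" where
  "top_variant A = top_tail (tail A)"

fun proper :: "ty \<Rightarrow> nat \<Rightarrow> bool" where
  "proper (TVar n) x = (n \<noteq> x)"
| "proper (Later a) x = True"
| "proper (Arr a b) x = ((proper a x \<and> proper b x) \<or> top_variant b)"
| "proper (Mu a) x = (proper a (Suc x) \<or> top_variant (Mu a))"

inductive type_expr :: "ty \<Rightarrow> bool" where
  "type_expr (TVar n)"
| "type_expr a \<Longrightarrow> type_expr b \<Longrightarrow> type_expr (Arr a b)"
| "type_expr a \<Longrightarrow> type_expr (Later a)"
| "type_expr a \<Longrightarrow> proper a 0 \<Longrightarrow> type_expr (Mu a)"

datatype lterm = LVar nat | LApp lterm lterm | LAbs lterm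

fun lift_tm :: "nat \<Rightarrow> lterm \<Rightarrow> lterm" where
  "lift_tm k (LVar n) = (if n < k then LVar n else LVar (Suc n))"
| "lift_tm k (LApp s t) = LApp (lift_tm k s) (lift_tm k t)"
| "lift_tm k (LAbs s) = LAbs (lift_tm (Suc k) s)"

fun subst_tm :: "lterm \<Rightarrow> nat \<Rightarrow> lterm \<Rightarrow> lterm" where
  "subst_tm (LVar n) k u = (if n < k then LVar n else if n = k then u else LVar (n - 1))"
| "subst_tm (LApp s t) k u = LApp (subst_tm s k u) (subst_tm t k u)"
| "subst_tm (LAbs s) k u = LAbs (subst_tm s (Suc k) (lift_tm 0 u))"

inductive beta :: "lterm \<Rightarrow> lterm \<Rightarrow> bool" where
  "beta (LApp (LAbs s) t) (subst_tm s 0 t)"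
| "beta s s' \<Longrightarrow> beta (LApp s t) (LApp s' t)"
| "beta t t' \<Longrightarrow> beta (LApp s t) (LApp s t')"
| "beta s s' \<Longrightarrow> beta (LAbs s) (LAbs s')"

definition beta_eq :: "lterm \<Rightarrow> lterm \<Rightarrow> bool" where
  "beta_eq = equivclp beta"

fun lfv :: "lterm \<Rightarrow> nat set" where
  "lfv (LVar n) = {n}"
| "lfv (LApp s t) = lfv s \<union> lfv t"
| "lfv (LAbs s) = {n. Suc n \<in> lfv s}"

text \<open>Environment for the body of a binder: index 0 gets v, index n+1 gets rho n
  (this is rho[v/x] in de Bruijn form).\<close>
definition env_cons :: "'v \<Rightarrow> (nat \<Rightarrow> 'v) \<Rightarrow> nat \<Rightarrow> 'v" where
  "env_cons v \<rho> n = (if n = 0 then v else \<rho> (n - 1))"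

definition syn_lambda_algebra ::
  "('v \<Rightarrow> 'v \<Rightarrow> 'v) \<Rightarrow> (lterm \<Rightarrow> (nat \<Rightarrow> 'v) \<Rightarrow> 'v) \<Rightarrow> bool" where
  "syn_lambda_algebra app sem \<longleftrightarrow>
     (\<forall>x \<rho>. sem (LVar x) \<rho> = \<rho> x) \<and>
     (\<forall>M N \<rho>. sem (LApp M N) \<rho> = app (sem M \<rho>) (sem N \<rho>)) \<and>
     (\<forall>M \<rho> v. app (sem (LAbs M) \<rho>) v = sem M (env_cons v \<rho>)) \<and>
     (\<forall>M \<rho> \<rho>'. (\<forall>x\<in>lfv M. \<rho> x = \<rho>' x) \<longrightarrow> sem M \<rho> = sem M \<rho>') \<and>
     (\<forall>M N \<rho>. beta_eq M N \<longrightarrow> sem M \<rho> = sem N \<rho>)"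

definition wf_frame :: "('w \<Rightarrow> 'w \<Rightarrow> bool) \<Rightarrow> bool" where
  "wf_frame R \<longleftrightarrow> \<not> (\<exists>f :: nat \<Rightarrow> 'w. \<forall>i. R (f i) (f (Suc i)))"

definition locally_linear :: "('w \<Rightarrow> 'w \<Rightarrow> bool) \<Rightarrow> bool" where
  "locally_linear R \<longleftrightarrow>
     (\<forall>p q. R p q \<longrightarrow> (\<exists>r. R\<^sup>*\<^sup>* p r \<and> R r q \<and> (\<forall>s. R r s \<longrightarrow> R\<^sup>*\<^sup>* q s)))"

definition hereditary :: "('w \<Rightarrow> 'w \<Rightarrow> bool) \<Rightarrow> (nat \<Rightarrow> 'w \<Rightarrow> 'v set) \<Rightarrow> bool" where
  "hereditary R \<eta> \<longleftrightarrow> (\<forall>X p q. R p q \<longrightarrow> \<eta> X p \<subseteq> \<eta> X q)"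

definition interp_eqs ::
  "('w \<Rightarrow> 'w \<Rightarrow> bool) \<Rightarrow> ('v \<Rightarrow> 'v \<Rightarrow> 'v) \<Rightarrow> (nat \<Rightarrow> 'w \<Rightarrow> 'v set)
     \<Rightarrow> ('w \<Rightarrow> ty \<Rightarrow> 'v set) \<Rightarrow> bool" where
  "interp_eqs R app \<eta> J \<longleftrightarrow>
     (\<forall>p A. type_expr A \<longrightarrow> J p A =
        (if top_variant A then UNIV else
         (case A of
            TVar X \<Rightarrow> \<eta> X p
          | Later a \<Rightarrow> {u. \<forall>q. R p q \<longrightarrow> u \<in> J q a}
          | Arr a b \<Rightarrow> {u. \<forall>q. R\<^sup>*\<^sup>* p q \<longrightarrow> (\<forall>v\<in>J q a. app u v \<in> J q b)}
          | Mu a \<Rightarrow> J p (subst_ty a 0 (Mu a))))) \<and>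
     (\<forall>p A. \<not> type_expr A \<longrightarrow> J p A = {})"

text \<open>I[A]^eta_p: the function determined (by well-founded induction on p and the rank of A)
  by the defining equations; values on non-type-expressions are fixed to be empty.\<close>
definition interp ::
  "('w \<Rightarrow> 'w \<Rightarrow> bool) \<Rightarrow> ('v \<Rightarrow> 'v \<Rightarrow> 'v) \<Rightarrow> (nat \<Rightarrow> 'w \<Rightarrow> 'v set) \<Rightarrow> 'w \<Rightarrow> ty \<Rightarrow> 'v set" where
  "interp R app \<eta> = (THE J. interp_eqs R app \<eta> J)"

end

theory Submission imports Defs begin

text \<open>The inclusion of \<open>\<bullet>(A \<rightarrow> B)\<close> in \<open>\<bullet>A \<rightarrow> \<bullet>B\<close> holds in every frame, since
  \<open>p \<unrhd> q \<rhd> r\<close> implies \<open>p \<rhd> s \<unrhd> r\<close> for some \<open>s\<close>. For the reverse inclusion let \<open>p \<rhd> q \<unrhd> r\<close> and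
  \<open>v \<in> I[A]\<^sub>r\<close>: local linearity yields \<open>z\<close> with \<open>p \<unrhd> z \<rhd> r\<close> all of whose successors lie above
  \<open>r\<close>, so \<open>v \<in> I[\<bullet>A]\<^sub>z\<close> by heredity, and applying \<open>u\<close> at \<open>z\<close> puts \<open>u \<cdot> v\<close> into \<open>I[B]\<^sub>r\<close>.
  If instead \<open>p \<rhd> q\<close> violates local linearity, interpret \<open>X\<close> as the worlds above \<open>q\<close> and \<open>Y\<close>
  as the worlds strictly above \<open>q\<close> (well-foundedness keeps \<open>q\<close> itself out of \<open>Y\<close>): then \<open>\<bullet>(X \<rightarrow> Y)\<close>
  is empty at \<open>p\<close>, as testing at \<open>q\<close> shows, while \<open>\<bullet>X \<rightarrow> \<bullet>Y\<close> is everything.\<close>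

lemma wf_frame_iff_wfp_conversep: "wf_frame R \<longleftrightarrow> wfp R\<inverse>\<inverse>"
  unfolding wf_frame_def wfp_def wf_iff_no_infinite_down_chain by simp

lemma wf_frame_wfp_tranclp: "wf_frame R \<Longrightarrow> wfp (R\<^sup>+\<^sup>+)\<inverse>\<inverse>"
  by (simp add: wf_frame_iff_wfp_conversep wfp_tranclp flip: tranclp_converse)

lemma wf_frame_tranclp_irrefl: "wf_frame R \<Longrightarrow> \<not> R\<^sup>+\<^sup>+ p p"
  using wf_frame_wfp_tranclp wf_not_refl unfolding wfp_def by fastforce

lemma top_variant_simps [simp]:
  "top_variant (Later a) = top_variant a"
  "top_variant (Arr a b) = top_variant b"
  "\<not> top_variant (TVar n)"
  by (simp_all add: top_variant_def)

lemma refers_to_tail_subst_ty: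
  "refers_to (tail a) j \<Longrightarrow> j < k \<Longrightarrow> refers_to (tail (subst_ty a k S)) j"
  by (induction a arbitrary: j k S) auto

lemma guarded_ref_tail_subst_ty:
  "guarded_ref (tail a) j \<Longrightarrow> j < k \<Longrightarrow> guarded_ref (tail (subst_ty a k S)) j"
  by (induction a arbitrary: j k S) (auto simp: refers_to_tail_subst_ty)

lemma top_variant_subst_ty: "top_variant a \<Longrightarrow> top_variant (subst_ty a k S)"
  unfolding top_variant_def
  by (induction a arbitrary: k S) (auto simp: guarded_ref_tail_subst_ty)

text \<open>The syntactic rank along which \<open>I\<close> recurses at a fixed world: \<open>\<top>\<close>-variants have a fixed
  value and \<open>\<bullet>\<close> moves to later worlds, so both get rank 0.\<close>

fun interp_rank :: "ty \<Rightarrow> nat" where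
  "interp_rank (TVar n) = 0"
| "interp_rank (Later a) = 0"
| "interp_rank (Arr a b) = (if top_variant b then 0 else Suc (max (interp_rank a) (interp_rank b)))"
| "interp_rank (Mu a) = (if top_variant (Mu a) then 0 else Suc (interp_rank a))"

lemma interp_rank_top_variant: "top_variant a \<Longrightarrow> interp_rank a = 0"
  by (cases a) (auto simp: top_variant_def)

lemma interp_rank_subst_ty_le: "proper a k \<Longrightarrow> interp_rank (subst_ty a k S) \<le> interp_rank a"
proof (induction a arbitrary: k S)
  case (Arr a b)
  show ?case
  proof (cases "top_variant (subst_ty b k S)")
    case True
    then show ?thesis by simp
  next
    case False
    then have "\<not> top_variant b"
      using top_variant_subst_ty by blast
    with Arr.prems have "proper a k" "proper b k"
      by auto
    then have "max (interp_rank (subst_ty a k S)) (interp_rank (subst_ty b k S))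
        \<le> max (interp_rank a) (interp_rank b)"
      using Arr.IH by (blast intro: max.mono)
    with False \<open>\<not> top_variant b\<close> show ?thesis
      by simp
  qed
next
  case (Mu a)
  then show ?case
    using top_variant_subst_ty[of "Mu a" k S]
    by (cases "top_variant (subst_ty (Mu a) k S)")
       (auto simp: interp_rank_top_variant simp del: subst_ty.simps, auto)
qed auto

lemma type_expr_Mu_proper: "type_expr (Mu a) \<Longrightarrow> proper a 0"
  by (cases rule: type_expr.cases) auto

context
  fixes R :: "'w \<Rightarrow> 'w \<Rightarrow> bool" and app :: "'v \<Rightarrow> 'v \<Rightarrow> 'v" and \<eta> :: "nat \<Rightarrow> 'w \<Rightarrow> 'v set"
  assumes wf_frame: "wf_frame R"
begin

text \<open>The recursion of \<open>interp_eqs\<close>; the quantifiers over worlds are written with conditional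
  membership so that every recursive call sits under a condition the termination proof can use.\<close>

function interp_rec :: "'w \<Rightarrow> ty \<Rightarrow> 'v set" where
  "interp_rec p A =
    (if \<not> type_expr A then {} else if top_variant A then UNIV else
      (case A of
        TVar X \<Rightarrow> \<eta> X p
      | Later a \<Rightarrow> {u. \<forall>q. u \<in> (if R p q then interp_rec q a else UNIV)}
      | Arr a b \<Rightarrow> {u. \<forall>q v. v \<in> (if R\<^sup>*\<^sup>* p q then interp_rec q a else {}) \<longrightarrow>
                          app u v \<in> (if R\<^sup>*\<^sup>* p q then interp_rec q b else UNIV)}
      | Mu a \<Rightarrow> interp_rec p (subst_ty a 0 (Mu a))))"
  by pat_completeness auto

termination
proof (relation "{(q, p). R\<^sup>+\<^sup>+ p q} <*lex*> measure interp_rank")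
  show "wf ({(q, p). R\<^sup>+\<^sup>+ p q} <*lex*> measure interp_rank)"
    using wf_frame_wfp_tranclp[OF wf_frame] by (simp add: wfp_def wf_lex_prod)
qed (auto dest: rtranclpD elim: type_expr.cases
          simp: interp_rank_subst_ty_le type_expr_Mu_proper le_imp_less_Suc)

declare interp_rec.simps [simp del]

lemma interp_eqs_interp_rec: "interp_eqs R app \<eta> interp_rec"
  unfolding interp_eqs_def
  by (intro conjI allI impI; subst interp_rec.simps; auto split: ty.splits)

lemma interp_eqs_unique: "interp_eqs R app \<eta> J \<Longrightarrow> J p A = interp_rec p A"
proof (induction p A rule: interp_rec.induct)
  case (1 p A)
  then have J: "J p A =
     (if \<not> type_expr A then {} else if top_variant A then UNIV else
       (case A of
          TVar X \<Rightarrow> \<eta> X p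
        | Later a \<Rightarrow> {u. \<forall>q. R p q \<longrightarrow> u \<in> J q a}
        | Arr a b \<Rightarrow> {u. \<forall>q. R\<^sup>*\<^sup>* p q \<longrightarrow> (\<forall>v\<in>J q a. app u v \<in> J q b)}
        | Mu a \<Rightarrow> J p (subst_ty a 0 (Mu a))))"
    unfolding interp_eqs_def by auto
  show ?case
  proof (cases "type_expr A \<and> \<not> top_variant A")
    case False
    then show ?thesis by (subst J, subst interp_rec.simps) auto
  next
    case True
    with 1 show ?thesis by (subst J, subst interp_rec.simps) (cases A; auto)
  qed
qed

lemma interp_eq_interp_rec: "interp R app \<eta> = interp_rec"
  unfolding interp_def
  by (intro the_equality interp_eqs_interp_rec ext interp_eqs_unique)

lemma interp_rec_mono:
  assumes "hereditary R \<eta>"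
  shows "R p q \<Longrightarrow> interp_rec p A \<subseteq> interp_rec q A"
proof (induction p A arbitrary: q rule: interp_rec.induct)
  case (1 p A)
  show ?case
  proof (cases "type_expr A \<and> \<not> top_variant A")
    case False
    then show ?thesis by (subst (1 2) interp_rec.simps) auto
  next
    case True
    show ?thesis
    proof (cases A)
      case (TVar X)
      with True assms \<open>R p q\<close> show ?thesis
        by (subst (1 2) interp_rec.simps) (auto simp: hereditary_def)
    next
      case (Arr a b)
      with True \<open>R p q\<close> show ?thesis
        by (subst (1 2) interp_rec.simps) (auto intro: converse_rtranclp_into_rtranclp)
    next
      case (Later a)
      have "u \<in> interp_rec s a" if "u \<in> interp_rec p A" "R q s" for u s
      proof -
        from that(1) True Later have "u \<in> interp_rec q a"
          using \<open>R p q\<close> by (subst (asm) interp_rec.simps) (auto dest: spec[of _ q])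
        with 1(3)[OF _ _ Later \<open>R p q\<close> \<open>R q s\<close>] True Later show ?thesis
          by auto
      qed
      with True Later show ?thesis
        by (subst (2) interp_rec.simps) auto
    next
      case (Mu a)
      with True 1 show ?thesis
        by (subst (1 2) interp_rec.simps) auto
    qed
  qed
qed

end

lemma interp_top_variant:
  assumes "wf_frame R" "type_expr a" "top_variant a"
  shows "interp R app \<eta> p a = UNIV"
  unfolding interp_eq_interp_rec[OF assms(1)] using assms(2,3)
  by (subst interp_rec.simps[OF assms(1)]) simp

lemma interp_TVar:
  assumes "wf_frame R"
  shows "interp R app \<eta> p (TVar n) = \<eta> n p"
  unfolding interp_eq_interp_rec[OF assms(1)]
  by (subst interp_rec.simps[OF assms(1)]) (simp add: type_expr.intros)

lemma interp_Later:
  assumes "wf_frame R" "type_expr a" "\<not> top_variant a"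
  shows "interp R app \<eta> p (Later a) = {u. \<forall>q. R p q \<longrightarrow> u \<in> interp R app \<eta> q a}"
  unfolding interp_eq_interp_rec[OF assms(1)] using assms(2,3)
  by (subst interp_rec.simps[OF assms(1)]) (auto intro: type_expr.intros)

lemma interp_Arr:
  assumes "wf_frame R" "type_expr a" "type_expr b" "\<not> top_variant b"
  shows "interp R app \<eta> p (Arr a b) =
    {u. \<forall>q. R\<^sup>*\<^sup>* p q \<longrightarrow> (\<forall>v\<in>interp R app \<eta> q a. app u v \<in> interp R app \<eta> q b)}"
  unfolding interp_eq_interp_rec[OF assms(1)] using assms(2-4)
  by (subst interp_rec.simps[OF assms(1)]) (auto intro: type_expr.intros)

lemma interp_LaterD:
  "wf_frame R \<Longrightarrow> type_expr a \<Longrightarrow> v \<in> interp R app \<eta> q (Later a) \<Longrightarrow> R q r \<Longrightarrow>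
    v \<in> interp R app \<eta> r a"
  by (cases "top_variant a") (auto simp: interp_top_variant interp_Later)

lemma interp_LaterI:
  "wf_frame R \<Longrightarrow> type_expr a \<Longrightarrow> (\<And>r. R q r \<Longrightarrow> v \<in> interp R app \<eta> r a) \<Longrightarrow>
    v \<in> interp R app \<eta> q (Later a)"
  by (cases "top_variant a") (auto simp: interp_top_variant interp_Later type_expr.intros)

lemma interp_mono_rtranclp:
  assumes "wf_frame R" "hereditary R \<eta>"
  shows "R\<^sup>*\<^sup>* p q \<Longrightarrow> interp R app \<eta> p A \<subseteq> interp R app \<eta> q A"
  unfolding interp_eq_interp_rec[OF assms(1)]
  by (induction rule: rtranclp_induct) (use interp_rec_mono[OF assms] in blast)+

lemma interp_Later_Arr_subset:
  assumes "wf_frame R" "type_expr A" "type_expr B"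
  shows "interp R app \<eta> p (Later (Arr A B)) \<subseteq> interp R app \<eta> p (Arr (Later A) (Later B))"
proof (cases "top_variant B")
  case True
  with assms show ?thesis by (simp add: interp_top_variant type_expr.intros)
next
  case False
  show ?thesis
  proof
    fix u assume "u \<in> interp R app \<eta> p (Later (Arr A B))"
    with assms False have u: "app u v \<in> interp R app \<eta> r B"
      if "R p q" "R\<^sup>*\<^sup>* q r" "v \<in> interp R app \<eta> r A" for q r v
      using that by (simp add: interp_Later interp_Arr type_expr.intros)
    have "app u v \<in> interp R app \<eta> q (Later B)"
      if "R\<^sup>*\<^sup>* p q" "v \<in> interp R app \<eta> q (Later A)" for q v
    proof (rule interp_LaterI[OF assms(1,3)])
      fix r assume "R q r"
      with \<open>R\<^sup>*\<^sup>* p q\<close> obtain s where "R p s" "R\<^sup>*\<^sup>* s r"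
        by (metis rtranclp_into_tranclp1 tranclpD)
      then show "app u v \<in> interp R app \<eta> r B"
        using u interp_LaterD[OF assms(1,2) that(2) \<open>R q r\<close>] by blast
    qed
    with assms False show "u \<in> interp R app \<eta> p (Arr (Later A) (Later B))"
      by (simp add: interp_Arr type_expr.intros)
  qed
qed

lemma interp_Arr_Later_subset:
  assumes "wf_frame R" "locally_linear R" "hereditary R \<eta>" "type_expr A" "type_expr B"
  shows "interp R app \<eta> p (Arr (Later A) (Later B)) \<subseteq> interp R app \<eta> p (Later (Arr A B))"
proof (cases "top_variant B")
  case True
  with assms show ?thesis by (simp add: interp_top_variant type_expr.intros)
next
  case False
  show ?thesis
  proof
    fix u assume "u \<in> interp R app \<eta> p (Arr (Later A) (Later B))"
    with assms False have u: "app u v \<in> interp R app \<eta> q (Later B)"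
      if "R\<^sup>*\<^sup>* p q" "v \<in> interp R app \<eta> q (Later A)" for q v
      using that by (simp add: interp_Arr type_expr.intros)
    have "app u v \<in> interp R app \<eta> r B"
      if "R p q" "R\<^sup>*\<^sup>* q r" "v \<in> interp R app \<eta> r A" for q r v
    proof -
      from \<open>R p q\<close> \<open>R\<^sup>*\<^sup>* q r\<close> have "R\<^sup>+\<^sup>+ p r"
        by (rule rtranclp_into_tranclp2)
      then obtain x where "R\<^sup>*\<^sup>* p x" "R x r"
        by (cases rule: tranclp.cases) (auto dest: tranclp_into_rtranclp)
      moreover from \<open>locally_linear R\<close> \<open>R x r\<close> obtain z
        where "R\<^sup>*\<^sup>* x z" "R z r" "\<And>s. R z s \<Longrightarrow> R\<^sup>*\<^sup>* r s"
        unfolding locally_linear_def by blast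
      ultimately have z: "R\<^sup>*\<^sup>* p z" "R z r" "\<And>s. R z s \<Longrightarrow> R\<^sup>*\<^sup>* r s"
        by auto
      have "v \<in> interp R app \<eta> z (Later A)"
      proof (rule interp_LaterI[OF assms(1,4)])
        fix s assume "R z s"
        then show "v \<in> interp R app \<eta> s A"
          using z(3) interp_mono_rtranclp[OF assms(1,3)] \<open>v \<in> interp R app \<eta> r A\<close> by blast
      qed
      with z(1) have "app u v \<in> interp R app \<eta> z (Later B)"
        by (rule u)
      then show ?thesis
        by (rule interp_LaterD[OF assms(1,5) _ z(2)])
    qed
    with assms False show "u \<in> interp R app \<eta> p (Later (Arr A B))"
      by (simp add: interp_Later interp_Arr type_expr.intros)
  qed
qed

lemma interp_Later_Arr_counterexample:
  assumes "wf_frame R" "\<not> locally_linear R"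
  obtains \<eta> :: "nat \<Rightarrow> 'w \<Rightarrow> 'v set" and p where "hereditary R \<eta>"
    and "interp R app \<eta> p (Later (Arr (TVar 0) (TVar 1))) = {}"
    and "interp R app \<eta> p (Arr (Later (TVar 0)) (Later (TVar 1))) = UNIV"
proof -
  from assms(2) obtain p q where "R p q"
    and nonlinear: "\<And>r. R\<^sup>*\<^sup>* p r \<Longrightarrow> R r q \<Longrightarrow> \<exists>s. R r s \<and> \<not> R\<^sup>*\<^sup>* q s"
    unfolding locally_linear_def by blast
  define \<eta> :: "nat \<Rightarrow> 'w \<Rightarrow> 'v set" where
    "\<eta> n w = (if (if n = 0 then R\<^sup>*\<^sup>* q w else R\<^sup>+\<^sup>+ q w) then UNIV else {})" for n w
  have "hereditary R \<eta>"
    unfolding hereditary_def \<eta>_def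
    by (auto intro: rtranclp.rtrancl_into_rtrancl tranclp.trancl_into_trancl)
  have types: "type_expr (TVar 0)" "type_expr (TVar 1)"
    by (auto intro: type_expr.intros)
  have Later_TVar: "interp R app \<eta> w (Later (TVar n)) = {u. \<forall>r. R w r \<longrightarrow> u \<in> \<eta> n r}" for w n
    using assms(1) by (simp add: interp_Later interp_TVar type_expr.intros)
  have "u \<notin> interp R app \<eta> p (Later (Arr (TVar 0) (TVar 1)))" for u
  proof
    assume "u \<in> interp R app \<eta> p (Later (Arr (TVar 0) (TVar 1)))"
    with \<open>R p q\<close> have "app u v \<in> \<eta> 1 q" if "v \<in> \<eta> 0 q" for v
      using assms(1) types that by (simp add: interp_Later interp_Arr interp_TVar type_expr.intros)
    then show False
      using wf_frame_tranclp_irrefl[OF assms(1), of q] by (simp add: \<eta>_def)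
  qed
  moreover have "app u v \<in> interp R app \<eta> w (Later (TVar 1))"
    if "R\<^sup>*\<^sup>* p w" "v \<in> interp R app \<eta> w (Later (TVar 0))" for u v w
  proof -
    have above_q: "R\<^sup>*\<^sup>* q r" if "R w r" for r
      using \<open>v \<in> _\<close> that unfolding Later_TVar by (auto simp: \<eta>_def split: if_splits)
    have "R\<^sup>+\<^sup>+ q r" if "R w r" for r
    proof -
      have "r \<noteq> q"
        using nonlinear[OF \<open>R\<^sup>*\<^sup>* p w\<close>] above_q that by blast
      with above_q[OF that] show ?thesis
        by (auto dest: rtranclpD)
    qed
    then show ?thesis
      unfolding Later_TVar by (simp add: \<eta>_def)
  qed
  then have "interp R app \<eta> p (Arr (Later (TVar 0)) (Later (TVar 1))) = UNIV"
    using assms(1) types by (simp add: interp_Arr type_expr.intros)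
  ultimately show thesis
    using \<open>hereditary R \<eta>\<close> that by blast
qed

theorem theorem3:
  fixes app :: "'v \<Rightarrow> 'v \<Rightarrow> 'v"
    and sem :: "lterm \<Rightarrow> (nat \<Rightarrow> 'v) \<Rightarrow> 'v"
    and R :: "'w \<Rightarrow> 'w \<Rightarrow> bool"
  assumes "syn_lambda_algebra app sem"
    and "wf_frame R"
  shows "(\<forall>A B (\<eta> :: nat \<Rightarrow> 'w \<Rightarrow> 'v set) p. type_expr A \<longrightarrow> type_expr B \<longrightarrow> hereditary R \<eta> \<longrightarrow>
            interp R app \<eta> p (Later (Arr A B)) = interp R app \<eta> p (Arr (Later A) (Later B)))
         \<longleftrightarrow> locally_linear R"
proof
  assume later_distrib: "\<forall>A B (\<eta> :: nat \<Rightarrow> 'w \<Rightarrow> 'v set) p. type_expr A \<longrightarrow> type_expr B \<longrightarrow>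
    hereditary R \<eta> \<longrightarrow> interp R app \<eta> p (Later (Arr A B)) = interp R app \<eta> p (Arr (Later A) (Later B))"
  show "locally_linear R"
  proof (rule ccontr)
    assume "\<not> locally_linear R"
    with \<open>wf_frame R\<close> obtain \<eta> :: "nat \<Rightarrow> 'w \<Rightarrow> 'v set" and p where "hereditary R \<eta>"
      and "interp R app \<eta> p (Later (Arr (TVar 0) (TVar 1))) = {}"
      and "interp R app \<eta> p (Arr (Later (TVar 0)) (Later (TVar 1))) = UNIV"
      by (rule interp_Later_Arr_counterexample)
    with later_distrib show False
      by (metis UNIV_not_empty type_expr.intros(1))
  qed
next
  assume "locally_linear R"
  show "\<forall>A B (\<eta> :: nat \<Rightarrow> 'w \<Rightarrow> 'v set) p. type_expr A \<longrightarrow> type_expr B \<longrightarrow>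
    hereditary R \<eta> \<longrightarrow> interp R app \<eta> p (Later (Arr A B)) = interp R app \<eta> p (Arr (Later A) (Later B))"
  proof (intro allI impI)
    fix A B p and \<eta> :: "nat \<Rightarrow> 'w \<Rightarrow> 'v set"
    assume "type_expr A" "type_expr B" "hereditary R \<eta>"
    with \<open>wf_frame R\<close> \<open>locally_linear R\<close>
    show "interp R app \<eta> p (Later (Arr A B)) = interp R app \<eta> p (Arr (Later A) (Later B))"
      by (intro subset_antisym interp_Later_Arr_subset interp_Arr_Later_subset)
  qed
qed

end
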